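(* Let $a$ be a point of $AG(4,3)$ and let $L_1,L_2,L_3,L_4$ be four distinct $a$-lines whose $8$ points are not co-hyperplanar. Then there are exactly eight demicaps with anchor point $a$ that contain $L_1\cup L_2\cup L_3\cup L_4$.
   Context: $AG(4,3)$ is the affine space $\mathbb{F}_3^4$; a line is a set of three distinct points $\{x,y,z\}$ with $x+y+z=0$. A cap is a set of points containing no line. A hyperplane is a $3$-dimensional affine subspace of $\mathbb{F}_3^4$; a set of points is co-hyperplanar if it lies in a common hyperplane. For a point $a$, an $a$-line is a pair of points $\{b,c\}$ such that $\{a,b,c\}$ is a line. A demicap with anchor point $a$ is a cap consisting of the $10$ points of five $a$-lines such that no four of these five $a$-lines are co-hyperplanar. *)

theory Defs
  imports "HOL-Analysis.Finite_Cartesian_Product" "HOL-Library.Numeral_Type"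
begin

text \<open>Points of AG(4,3) = F_3^4, with F_3 the numeral type 3 (integers mod 3).\<close>
type_synonym point = "3 ^ 4"

definition smul :: "3 \<Rightarrow> point \<Rightarrow> point" where
  "smul s u = (\<chi> i. s * u $ i)"

definition is_line :: "point set \<Rightarrow> bool" where
  "is_line L \<longleftrightarrow> (\<exists>x y z. L = {x, y, z} \<and> x \<noteq> y \<and> y \<noteq> z \<and> x \<noteq> z \<and> x + y + z = 0)"

definition is_cap :: "point set \<Rightarrow> bool" where
  "is_cap C \<longleftrightarrow> (\<forall>L. is_line L \<longrightarrow> \<not> L \<subseteq> C)"

definition hyperplane :: "point set \<Rightarrow> bool" where
  "hyperplane H \<longleftrightarrow> (\<exists>p u v w.
      (\<forall>s t r. smul s u + smul t v + smul r w = 0 \<longrightarrow> s = 0 \<and> t = 0 \<and> r = 0) \<and>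
      H = {p + smul s u + smul t v + smul r w | s t r. True})"

definition cohyperplanar :: "point set \<Rightarrow> bool" where
  "cohyperplanar S \<longleftrightarrow> (\<exists>H. hyperplane H \<and> S \<subseteq> H)"

definition a_line :: "point \<Rightarrow> point set \<Rightarrow> bool" where
  "a_line a P \<longleftrightarrow> (\<exists>b c. P = {b, c} \<and> is_line {a, b, c} \<and> a \<noteq> b \<and> a \<noteq> c \<and> b \<noteq> c)"

definition demicap :: "point \<Rightarrow> point set \<Rightarrow> bool" where
  "demicap a D \<longleftrightarrow> is_cap D \<and>
     (\<exists>M. card M = 5 \<and> (\<forall>P\<in>M. a_line a P) \<and> D = \<Union>M \<and> card D = 10 \<and>
          (\<forall>M'\<subseteq>M. card M' = 4 \<longrightarrow> \<not> cohyperplanar (\<Union>M')))"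

end

theory Submission
  imports Defs "HOL-Analysis.Cartesian_Space"
begin

text \<open>
  Write \<open>L\<^sub>i = {a + d\<^sub>i, a - d\<^sub>i}\<close>. Since \<open>(a + d) - (a - d) = -d\<close> in characteristic 3,
  the eight points lie in some hyperplane exactly when the \<open>d\<^sub>i\<close> lie in a 3-dimensional
  subspace; so the hypothesis says that \<open>d\<^sub>1, \<dots>, d\<^sub>4\<close> span \<open>F\<^sub>3\<^sup>4\<close>, and \<open>x \<mapsto> a + \<Sum>\<^sub>i x\<^sub>i d\<^sub>i\<close> is an
  affine bijection sending \<open>0\<close> to \<open>a\<close> and the standard lines \<open>{e\<^sub>i, -e\<^sub>i}\<close> to the \<open>L\<^sub>i\<close>.
  Affine bijections preserve lines and hyperplanes, hence demicaps, so we may count demicaps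
  anchored at \<open>0\<close> containing the standard lines. The fifth line of such a demicap is some
  \<open>{c, -c}\<close>, and if \<open>c\<^sub>i = 0\<close> the four lines other than \<open>{e\<^sub>i, -e\<^sub>i}\<close> lie in the hyperplane
  \<open>x\<^sub>i = 0\<close>. Conversely every \<open>c\<close> without zero coordinate works: coordinatewise multiplication
  by \<open>c\<close> fixes the standard lines and moves \<open>{1, -1}\<close> to \<open>{c, -c}\<close>, and the demicap property of
  the standard lines together with \<open>{1, -1}\<close> is a finite check. The 16 such vectors \<open>c\<close> give
  8 lines \<open>{c, -c}\<close>.
\<close>

lemma F3_cases: fixes x :: 3 shows "x = 0 \<or> x = 1 \<or> x = 2"
  using exhaust_3[of x] by auto

lemma F3_uminus_eq_double: fixes s :: 3 shows "- s = s + s"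
  using F3_cases[of s] by auto

lemma F3_mult_self: fixes x :: 3 shows "x \<noteq> 0 \<Longrightarrow> x * x = 1"
  using F3_cases[of x] by auto

lemma index4_cases: fixes k :: 4 shows "k = 0 \<or> k = 1 \<or> k = 2 \<or> k = 3"
  using exhaust_4[of k] by auto

lemma all_index4_iff: "(\<forall>i :: 4. P i) \<longleftrightarrow> P 0 \<and> P 1 \<and> P 2 \<and> P 3"
proof
  assume P: "P 0 \<and> P 1 \<and> P 2 \<and> P 3"
  show "\<forall>i. P i"
  proof
    fix i :: 4
    show "P i" using index4_cases[of i] P by auto
  qed
qed simp

lemma UNIV_index4: "(UNIV :: 4 set) = {0, 1, 2, 3}"
  using index4_cases by blast

lemma point_uminus_eq_double: fixes x :: point shows "- x = x + x"
  by (simp add: vec_eq_iff F3_uminus_eq_double)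

lemma point_double_eq_0_iff: fixes x :: point shows "x + x = 0 \<longleftrightarrow> x = 0"
  by (simp flip: point_uminus_eq_double)

lemma point_add_self3: fixes x :: point shows "x + x + x = 0"
  by (simp flip: point_uminus_eq_double)

lemma point_uminus_double: fixes x :: point shows "- (x + x) = x"
  by (simp flip: point_uminus_eq_double)

definition vec4 :: "3 \<Rightarrow> 3 \<Rightarrow> 3 \<Rightarrow> 3 \<Rightarrow> point" where
  "vec4 a b c d = (\<chi> i. if i = 0 then a else if i = 1 then b else if i = 2 then c else d)"

lemma vec4_nth [simp]:
  "vec4 a b c d $ 0 = a" "vec4 a b c d $ 1 = b" "vec4 a b c d $ 2 = c" "vec4 a b c d $ 3 = d"
  by (simp_all add: vec4_def)

lemma point_eq_iff:
  fixes x y :: point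
  shows "x = y \<longleftrightarrow> x $ 0 = y $ 0 \<and> x $ 1 = y $ 1 \<and> x $ 2 = y $ 2 \<and> x $ 3 = y $ 3"
  unfolding vec_eq_iff by (rule all_index4_iff)

lemma vec4_eq_iff [simp]: "vec4 a b c d = vec4 a' b' c' d' \<longleftrightarrow> a = a' \<and> b = b' \<and> c = c' \<and> d = d'"
  by (simp add: point_eq_iff)

lemma vec4_0: "0 = vec4 0 0 0 0"
  by (simp add: point_eq_iff)

lemma vec4_1: "1 = vec4 1 1 1 1"
  by (simp add: point_eq_iff)

lemma vec4_add [simp]: "vec4 a b c d + vec4 a' b' c' d' = vec4 (a + a') (b + b') (c + c') (d + d')"
  by (simp add: point_eq_iff)

lemma vec4_uminus [simp]: "- vec4 a b c d = vec4 (- a) (- b) (- c) (- d)"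
  by (simp add: point_eq_iff)

lemma smul_nth [simp]: "smul s u $ i = s * u $ i"
  by (simp add: smul_def)

lemma smul_vec4 [simp]: "smul s (vec4 a b c d) = vec4 (s * a) (s * b) (s * c) (s * d)"
  by (simp add: point_eq_iff smul_def)

lemma smul_0_left [simp]: "smul 0 u = 0"
  and smul_1_left [simp]: "smul 1 u = u"
  and smul_0_right [simp]: "smul s 0 = 0"
  and smul_add_left: "smul (s + t) u = smul s u + smul t u"
  and smul_add_right: "smul s (u + v) = smul s u + smul s v"
  and smul_diff_left: "smul (s - t) u = smul s u - smul t u"
  and smul_minus_left: "smul (- s) u = - smul s u"
  and smul_smul: "smul s (smul t u) = smul (s * t) u"
  by (simp_all add: smul_def vec_eq_iff algebra_simps)

lemma smul_2: "smul 2 u = u + u"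
  using smul_add_left[of 1 1 u] by simp

lemma smul_F3_inverse: "s \<noteq> 0 \<Longrightarrow> smul s (smul s u) = u"
  by (simp add: smul_smul F3_mult_self)

section \<open>Linear combinations and spans\<close>

text \<open>
  Finite families of vectors are lists. \<open>lincomb\<close> silently truncates to the shorter of its two
  arguments; \<open>lin_span\<close> and \<open>lin_indep\<close> only use coefficient lists of full length.
\<close>

fun lincomb :: "3 list \<Rightarrow> point list \<Rightarrow> point" where
  "lincomb (c # cs) (u # us) = smul c u + lincomb cs us"
| "lincomb _ _ = 0"

definition lin_span :: "point list \<Rightarrow> point set" where
  "lin_span us = {lincomb cs us | cs. length cs = length us}"

definition lin_indep :: "point list \<Rightarrow> bool" where
  "lin_indep us \<longleftrightarrow> (\<forall>cs. length cs = length us \<longrightarrow> lincomb cs us = 0 \<longrightarrow> set cs \<subseteq> {0})"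

lemma lincomb_replicate_0 [simp]: "lincomb (replicate n 0) us = 0"
proof (induction us arbitrary: n)
  case (Cons u us)
  then show ?case by (cases n) simp_all
qed simp

lemma lincomb_diff:
  "length cs = length us \<Longrightarrow> length ds = length us \<Longrightarrow>
    lincomb cs us - lincomb ds us = lincomb (map2 (-) cs ds) us"
  by (induction us arbitrary: cs ds) (auto simp: length_Suc_conv smul_diff_left)

lemma lincomb_add:
  "length cs = length us \<Longrightarrow> length ds = length us \<Longrightarrow>
    lincomb cs us + lincomb ds us = lincomb (map2 (+) cs ds) us"
  by (induction us arbitrary: cs ds) (auto simp: length_Suc_conv smul_add_left)

lemma smul_lincomb: "smul s (lincomb cs us) = lincomb (map ((*) s) cs) us"
  by (induction cs us rule: lincomb.induct) (simp_all add: smul_add_right smul_smul)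

lemma lin_span_Nil [simp]: "lin_span [] = {0}"
  by (simp add: lin_span_def)

lemma lin_span_Cons: "lin_span (u # us) = {smul c u + y | c y. y \<in> lin_span us}"
proof (intro set_eqI iffI)
  fix x assume "x \<in> lin_span (u # us)"
  then obtain c cs where "x = smul c u + lincomb cs us" "length cs = length us"
    by (auto simp: lin_span_def length_Suc_conv)
  then show "x \<in> {smul c u + y | c y. y \<in> lin_span us}" unfolding lin_span_def by blast
next
  fix x assume "x \<in> {smul c u + y | c y. y \<in> lin_span us}"
  then obtain c cs where "x = lincomb (c # cs) (u # us)" "length (c # cs) = length (u # us)"
    by (auto simp: lin_span_def)
  then show "x \<in> lin_span (u # us)" unfolding lin_span_def by blast
qed

lemma zero_in_lin_span: "0 \<in> lin_span us"
  unfolding lin_span_def by (auto intro!: exI[of _ "replicate (length us) 0"])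

lemma lin_span_add: "x \<in> lin_span us \<Longrightarrow> y \<in> lin_span us \<Longrightarrow> x + y \<in> lin_span us"
  unfolding lin_span_def by (auto simp: lincomb_add)

lemma lin_span_smul: "x \<in> lin_span us \<Longrightarrow> smul s x \<in> lin_span us"
  unfolding lin_span_def by (auto simp: smul_lincomb)

lemma lin_span_uminus: "x \<in> lin_span us \<Longrightarrow> - x \<in> lin_span us"
  using lin_span_smul[of x us "- 1"] by (simp add: smul_minus_left)

lemma lin_span_diff: "x \<in> lin_span us \<Longrightarrow> y \<in> lin_span us \<Longrightarrow> x - y \<in> lin_span us"
  unfolding diff_conv_add_uminus by (intro lin_span_add lin_span_uminus)

lemma set_subset_lin_span: "set us \<subseteq> lin_span us"
proof (induction us)
  case (Cons u us)
  have "u \<in> lin_span (u # us)"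
  proof -
    have "u = smul 1 u + 0" by simp
    then show ?thesis unfolding lin_span_Cons using zero_in_lin_span by blast
  qed
  moreover have "y \<in> lin_span (u # us)" if "y \<in> lin_span us" for y
  proof -
    have "y = smul 0 u + y" by simp
    then show ?thesis unfolding lin_span_Cons using that by blast
  qed
  ultimately show ?case using Cons by auto
qed simp

lemma lin_span_subset: "set ds \<subseteq> lin_span us \<Longrightarrow> lin_span ds \<subseteq> lin_span us"
proof (induction ds)
  case (Cons d ds)
  then show ?case unfolding lin_span_Cons by (auto intro!: lin_span_add lin_span_smul)
qed (simp add: zero_in_lin_span)

lemma lin_span_coordinate_zero:
  assumes "\<And>u. u \<in> set us \<Longrightarrow> u $ i = 0" "x \<in> lin_span us"
  shows "x $ i = 0"
proof -
  have "lincomb cs us $ i = 0" for cs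
    using assms(1) by (induction cs us rule: lincomb.induct) simp_all
  then show ?thesis using assms(2) unfolding lin_span_def by blast
qed

lemma lin_span_eq_image:
  "lin_span us = (\<lambda>cs. lincomb cs us) ` {cs. length cs = length us}"
  by (auto simp: lin_span_def)

lemma finite_coefficient_lists: "finite {cs :: 3 list. length cs = n}"
  using finite_lists_length_eq[of "UNIV :: 3 set" n] by simp

lemma card_coefficient_lists: "card {cs :: 3 list. length cs = n} = 3 ^ n"
  using card_lists_length_eq[of "UNIV :: 3 set" n] by simp

lemma lin_indep_iff_inj_on:
  "lin_indep us \<longleftrightarrow> inj_on (\<lambda>cs. lincomb cs us) {cs. length cs = length us}"
proof
  assume indep: "lin_indep us"
  show "inj_on (\<lambda>cs. lincomb cs us) {cs. length cs = length us}"
  proof (rule inj_onI)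
    fix cs ds
    assume "cs \<in> {cs. length cs = length us}" "ds \<in> {cs. length cs = length us}"
      and eq: "lincomb cs us = lincomb ds us"
    then have len: "length cs = length us" "length ds = length us" by auto
    then have "lincomb (map2 (-) cs ds) us = 0" using eq lincomb_diff[of cs us ds] by simp
    moreover have "length (map2 (-) cs ds) = length us" using len by simp
    ultimately have "set (map2 (-) cs ds) \<subseteq> {0}" using indep unfolding lin_indep_def by blast
    then show "cs = ds" using len by (intro nth_equalityI) (auto simp: set_conv_nth)
  qed
next
  assume inj: "inj_on (\<lambda>cs. lincomb cs us) {cs. length cs = length us}"
  show "lin_indep us" unfolding lin_indep_def
  proof (intro allI impI)
    fix cs assume "length cs = length us" "lincomb cs us = 0"
    then have "cs = replicate (length us) 0"
      by (intro inj_onD[OF inj]) auto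
    then show "set cs \<subseteq> {0}" by auto
  qed
qed

lemma card_lin_span_le: "card (lin_span us) \<le> 3 ^ length us"
proof -
  have "card (lin_span us) \<le> card {cs :: 3 list. length cs = length us}"
    unfolding lin_span_eq_image by (rule card_image_le[OF finite_coefficient_lists])
  then show ?thesis by (simp only: card_coefficient_lists)
qed

lemma card_lin_span_3: "card (lin_span [u, v, w]) \<le> 27"
  using card_lin_span_le[of "[u, v, w]"] by simp

lemma card_lin_span_eq_iff: "card (lin_span us) = 3 ^ length us \<longleftrightarrow> lin_indep us"
  unfolding lin_indep_iff_inj_on lin_span_eq_image
  by (simp add: inj_on_iff_eq_card finite_coefficient_lists card_coefficient_lists)

lemma lin_span_eq_UNIV_iff: "lin_span us = UNIV \<longleftrightarrow> card (lin_span us) = 81"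
  using card_eq_UNIV_imp_eq_UNIV[of "lin_span us"] by auto

lemma lin_span_eq_UNIV_if_lin_indep: "length us = 4 \<Longrightarrow> lin_indep us \<Longrightarrow> lin_span us = UNIV"
  using card_lin_span_eq_iff[of us] by (simp add: lin_span_eq_UNIV_iff)

lemma lin_indep_length_le: "lin_indep us \<Longrightarrow> length us \<le> 4"
  using card_lin_span_eq_iff[of us] card_mono[of UNIV "lin_span us"]
  by (intro power_le_imp_le_exp[of 3]) auto

lemma lin_indep_Cons:
  assumes indep: "lin_indep us" and x: "x \<notin> lin_span us"
  shows "lin_indep (x # us)"
  unfolding lin_indep_def
proof (intro allI impI)
  fix cs assume "length cs = length (x # us)" and comb: "lincomb cs (x # us) = 0"
  then obtain c cs' where cs: "cs = c # cs'" "length cs' = length us"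
    by (auto simp: length_Suc_conv)
  have sum0: "smul c x + lincomb cs' us = 0" using comb cs(1) by simp
  have "c = 0"
  proof (rule ccontr)
    assume "c \<noteq> 0"
    have "x = smul c (smul c x)" using \<open>c \<noteq> 0\<close> by (simp add: smul_F3_inverse)
    also have "\<dots> = smul c (- lincomb cs' us)"
      using sum0 eq_neg_iff_add_eq_0[of "smul c x" "lincomb cs' us"] by simp
    finally have "x = smul c (- lincomb cs' us)" .
    moreover have "lincomb cs' us \<in> lin_span us" using cs(2) by (auto simp: lin_span_def)
    ultimately have "x \<in> lin_span us" by (simp add: lin_span_smul lin_span_uminus)
    then show False using x by contradiction
  qed
  then have "set cs' \<subseteq> {0}" using sum0 cs(2) indep unfolding lin_indep_def by simp
  then show "set cs \<subseteq> {0}" using cs(1) \<open>c = 0\<close> by simp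
qed

lemma ex_lin_indep_same_span: "\<exists>us. lin_indep us \<and> lin_span us = lin_span ds"
proof (induction ds)
  case Nil
  have "lin_indep []" by (simp add: lin_indep_def)
  then show ?case by blast
next
  case (Cons d ds)
  then obtain us where us: "lin_indep us" "lin_span us = lin_span ds" by blast
  show ?case
  proof (cases "d \<in> lin_span us")
    case True
    have "lin_span (d # ds) = lin_span ds"
    proof
      show "lin_span (d # ds) \<subseteq> lin_span ds"
        using True us(2) set_subset_lin_span[of ds] by (intro lin_span_subset) auto
      show "lin_span ds \<subseteq> lin_span (d # ds)"
        using set_subset_lin_span[of "d # ds"] by (intro lin_span_subset) auto
    qed
    then show ?thesis using us by auto
  next
    case False
    have "lin_span (d # us) = lin_span (d # ds)" using us(2) by (simp add: lin_span_Cons)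
    then show ?thesis using lin_indep_Cons[OF us(1) False] by blast
  qed
qed

lemma lin_indep_extend:
  assumes "lin_indep us" "length us \<le> n" "n \<le> 4"
  shows "\<exists>vs. lin_indep vs \<and> length vs = n \<and> lin_span us \<subseteq> lin_span vs"
  using assms(2,3)
proof (induction n rule: dec_induct)
  case base
  then show ?case using assms(1) by blast
next
  case (step n)
  then obtain vs where vs: "lin_indep vs" "length vs = n" "lin_span us \<subseteq> lin_span vs" by auto
  have "card (lin_span vs) = 3 ^ n" using vs(1,2) card_lin_span_eq_iff[of vs] by simp
  also have "\<dots> < 3 ^ 4" using step.prems by (intro power_strict_increasing) auto
  finally have "lin_span vs \<noteq> UNIV" by (auto simp: lin_span_eq_UNIV_iff)
  then obtain x where x: "x \<notin> lin_span vs" by blast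
  have "lin_span vs \<subseteq> lin_span (x # vs)"
    using set_subset_lin_span[of "x # vs"] by (intro lin_span_subset) auto
  then show ?case using lin_indep_Cons[OF vs(1) x] vs by (intro exI[of _ "x # vs"]) auto
qed

lemma proper_lin_span_subset_3:
  assumes "lin_span ds \<noteq> UNIV"
  shows "\<exists>u v w. lin_indep [u, v, w] \<and> lin_span ds \<subseteq> lin_span [u, v, w]"
proof -
  obtain us where us: "lin_indep us" "lin_span us = lin_span ds"
    using ex_lin_indep_same_span by blast
  have "length us \<noteq> 4"
    using us assms card_lin_span_eq_iff[of us] by (auto simp: lin_span_eq_UNIV_iff)
  then have "length us \<le> 3" using lin_indep_length_le[OF us(1)] by simp
  then obtain vs where vs: "lin_indep vs" "length vs = 3" "lin_span ds \<subseteq> lin_span vs"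
    using lin_indep_extend[OF us(1)] us(2) by fastforce
  then obtain u v w where "vs = [u, v, w]" by (auto simp: numeral_eq_Suc length_Suc_conv)
  then show ?thesis using vs by blast
qed

lemma all_length_Suc_iff: "(\<forall>xs. length xs = Suc n \<longrightarrow> P xs) \<longleftrightarrow> (\<forall>x xs. length xs = n \<longrightarrow> P (x # xs))"
  by (metis length_Suc_conv)

lemma ex_length_Suc_iff: "(\<exists>xs. P xs \<and> length xs = Suc n) \<longleftrightarrow> (\<exists>x xs. P (x # xs) \<and> length xs = n)"
  by (metis length_Suc_conv)

lemma lin_span_3: "lin_span [u, v, w] = {smul s u + smul t v + smul r w | s t r. True}"
  unfolding lin_span_def by (simp add: numeral_eq_Suc ex_length_Suc_iff add.assoc)

lemma lin_indep_3:
  "lin_indep [u, v, w] \<longleftrightarrow> (\<forall>s t r. smul s u + smul t v + smul r w = 0 \<longrightarrow> s = 0 \<and> t = 0 \<and> r = 0)"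
  unfolding lin_indep_def by (simp add: numeral_eq_Suc all_length_Suc_iff add.assoc)

lemma lin_span_4:
  "lin_span [u, v, w, z] = {smul s u + smul t v + smul r w + smul q z | s t r q. True}"
  unfolding lin_span_def by (simp add: numeral_eq_Suc ex_length_Suc_iff add.assoc)

lemma lin_indep_4:
  "lin_indep [u, v, w, z] \<longleftrightarrow>
    (\<forall>s t r q. smul s u + smul t v + smul r w + smul q z = 0 \<longrightarrow> s = 0 \<and> t = 0 \<and> r = 0 \<and> q = 0)"
  unfolding lin_indep_def by (simp add: numeral_eq_Suc all_length_Suc_iff add.assoc)

section \<open>Hyperplanes through pairs of points\<close>

lemma hyperplane_iff: "hyperplane H \<longleftrightarrow> (\<exists>p u v w. lin_indep [u, v, w] \<and> H = (+) p ` lin_span [u, v, w])"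
proof -
  have "{p + smul s u + smul t v + smul r w | s t r. True} = (+) p ` lin_span [u, v, w]" for p u v w
    unfolding lin_span_3 by (auto simp: add.assoc)
  then show ?thesis unfolding hyperplane_def lin_indep_3 by simp
qed

lemma cohyperplanar_pairs_iff:
  "cohyperplanar (\<Union>d\<in>set ds. {a + d, a - d}) \<longleftrightarrow> lin_span ds \<noteq> UNIV"
proof
  assume "cohyperplanar (\<Union>d\<in>set ds. {a + d, a - d})"
  then obtain p u v w where H: "(\<Union>d\<in>set ds. {a + d, a - d}) \<subseteq> (+) p ` lin_span [u, v, w]"
    unfolding cohyperplanar_def hyperplane_iff by blast
  have "d \<in> lin_span [u, v, w]" if "d \<in> set ds" for d
  proof -
    obtain y z where yz: "a + d = p + y" "a - d = p + z" "y \<in> lin_span [u, v, w]" "z \<in> lin_span [u, v, w]"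
      using H \<open>d \<in> set ds\<close> by blast
    have "(a + d) - (a - d) = d + d" by simp
    then have "d = - ((a + d) - (a - d))" by (simp only: point_uminus_double)
    also have "\<dots> = z - y" using yz(1,2) by simp
    finally show ?thesis using yz(3,4) by (simp add: lin_span_diff)
  qed
  then have "lin_span ds \<subseteq> lin_span [u, v, w]" by (intro lin_span_subset) auto
  then have "card (lin_span ds) \<le> 27" using card_lin_span_3 card_mono[OF finite] order_trans by blast
  then show "lin_span ds \<noteq> UNIV" by auto
next
  assume "lin_span ds \<noteq> UNIV"
  then obtain u v w where uvw: "lin_indep [u, v, w]" "lin_span ds \<subseteq> lin_span [u, v, w]"
    using proper_lin_span_subset_3 by blast
  have "a + d \<in> (+) a ` lin_span [u, v, w] \<and> a - d \<in> (+) a ` lin_span [u, v, w]" if "d \<in> set ds" for d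
  proof -
    have "d \<in> lin_span [u, v, w]" using that uvw(2) set_subset_lin_span by blast
    then show ?thesis using lin_span_uminus[of d] by force
  qed
  moreover have "hyperplane ((+) a ` lin_span [u, v, w])" using uvw(1) hyperplane_iff by blast
  ultimately show "cohyperplanar (\<Union>d\<in>set ds. {a + d, a - d})" unfolding cohyperplanar_def by blast
qed

section \<open>Lines and affine maps\<close>

lemma is_line_iff: "is_line L \<longleftrightarrow> card L = 3 \<and> sum id L = 0"
proof
  assume "is_line L"
  then obtain x y z where "L = {x, y, z}" "x \<noteq> y" "y \<noteq> z" "x \<noteq> z" "x + y + z = 0"
    unfolding is_line_def by blast
  then show "card L = 3 \<and> sum id L = 0" by (simp add: add.assoc)
next
  assume "card L = 3 \<and> sum id L = 0"
  then obtain x y z where "L = {x, y, z}" "x \<noteq> y" "y \<noteq> z" "x \<noteq> z" "sum id L = 0"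
    by (auto simp: card_3_iff)
  then show "is_line L" unfolding is_line_def
    by (intro exI[of _ x] exI[of _ y] exI[of _ z]) (simp add: add.assoc)
qed

lemma a_line_iff: "a_line a P \<longleftrightarrow> (\<exists>d. d \<noteq> 0 \<and> P = {a + d, a - d})"
proof
  assume "a_line a P"
  then obtain b c where P: "P = {b, c}" "is_line {a, b, c}" "a \<noteq> b" "a \<noteq> c" "b \<noteq> c"
    unfolding a_line_def by blast
  then have "(a + b) + c = 0" by (simp add: is_line_iff add.assoc)
  then have "c = - (a + b)" by (rule add.inverse_unique[symmetric])
  also have "\<dots> = - (a + a) - (b - a)" by simp
  also have "\<dots> = a - (b - a)" by (simp only: point_uminus_double)
  finally have "P = {a + (b - a), a - (b - a)}" using P(1) by simp
  moreover have "b - a \<noteq> 0" using P(3) by simp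
  ultimately show "\<exists>d. d \<noteq> 0 \<and> P = {a + d, a - d}" by blast
next
  assume "\<exists>d. d \<noteq> 0 \<and> P = {a + d, a - d}"
  then obtain d where d: "d \<noteq> 0" "P = {a + d, a - d}" by blast
  have "a + d \<noteq> a - d"
  proof
    assume "a + d = a - d"
    then have "d + d = 0" by (simp add: eq_neg_iff_add_eq_0[symmetric])
    then show False using d(1) point_double_eq_0_iff by blast
  qed
  then have distinct: "a \<noteq> a + d" "a \<noteq> a - d" "a + d \<noteq> a - d" using d(1) by simp_all
  have "a + (a + d) + (a - d) = a + a + a" by simp
  then have "is_line {a, a + d, a - d}"
    using distinct point_add_self3[of a] by (simp add: is_line_iff add.assoc)
  then show "a_line a P" unfolding a_line_def using d(2) distinct
    by (intro exI[of _ "a + d"] exI[of _ "a - d"]) simp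
qed

lemma a_line_0_iff: "a_line 0 P \<longleftrightarrow> (\<exists>d. d \<noteq> 0 \<and> P = {d, - d})"
  by (simp add: a_line_iff)

lemma a_line_0_eq: "a_line 0 P \<Longrightarrow> x \<in> P \<Longrightarrow> P = {x, - x}"
  by (auto simp: a_line_0_iff)

lemma a_line_0_mem:
  assumes "\<forall>P\<in>M. a_line 0 P" "x \<in> \<Union>M"
  shows "{x, - x} \<in> M"
proof -
  obtain P where "P \<in> M" "x \<in> P" using assms(2) by blast
  then show ?thesis using assms(1) a_line_0_eq by metis
qed

text \<open>
  Over \<open>F\<^sub>3\<close> additivity of \<open>x \<mapsto> g x - g 0\<close> already gives linearity, the only scalars being
  \<open>0\<close>, \<open>1\<close> and \<open>1 + 1\<close>.
\<close>

definition affine_map :: "(point \<Rightarrow> point) \<Rightarrow> bool" where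
  "affine_map g \<longleftrightarrow> (\<forall>x y. g (x + y) = g x + g y - g 0)"

lemma affine_map_add: "affine_map g \<Longrightarrow> g (x + y) = g x + g y - g 0"
  by (simp add: affine_map_def)

lemma affine_map_diff: "affine_map g \<Longrightarrow> g (x - y) = g x - g y + g 0"
  using affine_map_add[of g "x - y" y] by (simp add: algebra_simps)

lemma affine_map_smul: "affine_map g \<Longrightarrow> g (smul s x) = smul s (g x - g 0) + g 0"
  using F3_cases[of s] affine_map_add[of g x x]
  by (auto simp: smul_2 algebra_simps)

lemma affine_map_comb:
  "affine_map g \<Longrightarrow> g (p + smul s u + smul t v + smul r w) =
     g p + smul s (g u - g 0) + smul t (g v - g 0) + smul r (g w - g 0)"
  by (simp add: affine_map_add affine_map_smul algebra_simps)

lemma affine_map_inv: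
  assumes "bij g" "affine_map g"
  shows "affine_map (inv g)"
  unfolding affine_map_def
proof (intro allI)
  fix x y
  have g_inv: "g (inv g z) = z" for z using assms(1) by (simp add: bij_is_surj surj_f_inv_f)
  have "g (inv g x + inv g y - inv g 0) = x + y"
    using affine_map_diff[OF assms(2)] affine_map_add[OF assms(2)] g_inv by simp
  then show "inv g (x + y) = inv g x + inv g y - inv g 0"
    using assms(1) by (metis bij_is_inj inv_f_f)
qed

lemma is_line_image:
  assumes "inj g" "affine_map g" "is_line L"
  shows "is_line (g ` L)"
proof -
  obtain x y z where L: "L = {x, y, z}" "x \<noteq> y" "y \<noteq> z" "x \<noteq> z" "x + y + z = 0"
    using assms(3) unfolding is_line_def by blast
  have "g x + g y + g z = g (x + y + z) + g 0 + g 0"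
    using affine_map_add[OF assms(2), of "x + y" z] affine_map_add[OF assms(2), of x y]
    by (simp add: algebra_simps)
  also have "\<dots> = 0" using L(5) point_add_self3 by simp
  finally have "g x + g y + g z = 0" .
  moreover have "g x \<noteq> g y" "g y \<noteq> g z" "g x \<noteq> g z" using L assms(1) by (auto dest: injD)
  ultimately show ?thesis unfolding is_line_def L(1)
    by (intro exI[of _ "g x"] exI[of _ "g y"] exI[of _ "g z"]) simp
qed

lemma hyperplane_image:
  assumes "inj g" "affine_map g" "hyperplane H"
  shows "hyperplane (g ` H)"
proof -
  obtain p u v w where indep: "\<forall>s t r. smul s u + smul t v + smul r w = 0 \<longrightarrow> s = 0 \<and> t = 0 \<and> r = 0"
    and H: "H = {p + smul s u + smul t v + smul r w | s t r. True}"
    using assms(3) unfolding hyperplane_def by blast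
  define u' v' w' where "u' = g u - g 0" and "v' = g v - g 0" and "w' = g w - g 0"
  have g_comb: "g (p + smul s u + smul t v + smul r w) = g p + smul s u' + smul t v' + smul r w'" for p s t r
    unfolding u'_def v'_def w'_def by (rule affine_map_comb[OF assms(2)])
  have "g ` H = {g p + smul s u' + smul t v' + smul r w' | s t r. True}"
    unfolding H by (auto simp flip: g_comb)
  moreover have "s = 0 \<and> t = 0 \<and> r = 0" if "smul s u' + smul t v' + smul r w' = 0" for s t r
  proof -
    have "g (0 + smul s u + smul t v + smul r w) = g 0"
      using that g_comb[of 0 s t r] by (simp add: add.assoc)
    then have "smul s u + smul t v + smul r w = 0" using assms(1) by (simp add: inj_eq)
    then show ?thesis using indep by blast
  qed
  ultimately show ?thesis unfolding hyperplane_def by blast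
qed

lemma cohyperplanar_image_iff:
  assumes "bij g" "affine_map g"
  shows "cohyperplanar (g ` S) \<longleftrightarrow> cohyperplanar S"
proof
  assume "cohyperplanar (g ` S)"
  then obtain H where "hyperplane H" "g ` S \<subseteq> H" unfolding cohyperplanar_def by blast
  moreover have "inj (inv g)" using assms(1) bij_imp_bij_inv bij_is_inj by blast
  ultimately have "hyperplane (inv g ` H)" "inv g ` g ` S \<subseteq> inv g ` H"
    using hyperplane_image affine_map_inv[OF assms] by auto
  moreover have "inv g ` g ` S = S" using assms(1) by (simp add: bij_is_inj image_inv_f_f)
  ultimately show "cohyperplanar S" unfolding cohyperplanar_def by blast
next
  assume "cohyperplanar S"
  then show "cohyperplanar (g ` S)"
    using hyperplane_image[OF bij_is_inj[OF assms(1)] assms(2)] unfolding cohyperplanar_def by blast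
qed

lemma is_cap_image:
  assumes "bij g" "affine_map g" "is_cap C"
  shows "is_cap (g ` C)"
  unfolding is_cap_def
proof (intro allI impI notI)
  fix L assume L: "is_line L" "L \<subseteq> g ` C"
  have "inj (inv g)" using assms(1) bij_imp_bij_inv bij_is_inj by blast
  then have "is_line (inv g ` L)" by (rule is_line_image[OF _ affine_map_inv[OF assms(1,2)] L(1)])
  moreover have "inv g ` L \<subseteq> C"
    using image_mono[OF L(2), of "inv g"] assms(1) by (simp add: bij_is_inj image_inv_f_f)
  ultimately show False using assms(3) unfolding is_cap_def by blast
qed

lemma a_line_image:
  assumes "inj g" "affine_map g" "a_line a P"
  shows "a_line (g a) (g ` P)"
proof -
  obtain d where d: "d \<noteq> 0" "P = {a + d, a - d}" using assms(3) a_line_iff by blast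
  have "g (a + d) = g a + (g d - g 0)" using affine_map_add[OF assms(2)] by simp
  moreover have "g (a - d) = g a - (g d - g 0)" using affine_map_diff[OF assms(2)] by simp
  ultimately have "g ` P = {g a + (g d - g 0), g a - (g d - g 0)}" using d(2) by simp
  moreover have "g d - g 0 \<noteq> 0" using d(1) assms(1) by (auto dest: injD)
  ultimately show ?thesis unfolding a_line_iff by (intro exI[of _ "g d - g 0"]) simp
qed

lemma demicap_image:
  assumes "bij g" "affine_map g" "demicap a D"
  shows "demicap (g a) (g ` D)"
proof -
  have inj: "inj g" using assms(1) bij_is_inj by blast
  obtain M where M: "card M = 5" "\<forall>P\<in>M. a_line a P" "D = \<Union>M" "card D = 10"
    "\<forall>M'\<subseteq>M. card M' = 4 \<longrightarrow> \<not> cohyperplanar (\<Union>M')" and cap: "is_cap D"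
    using assms(3) unfolding demicap_def by blast
  have inj_image: "inj (image g)" using inj by (simp add: inj_on_def inj_image_eq_iff)
  have "\<not> cohyperplanar (\<Union>N')" if "N' \<subseteq> image g ` M" "card N' = 4" for N'
  proof -
    define M' where "M' = M \<inter> image g -` N'"
    have N': "N' = image g ` M'" unfolding M'_def using that(1) by auto
    then have "card M' = 4" using that(2) inj_image by (simp add: card_image inj_on_subset)
    then have "\<not> cohyperplanar (\<Union>M')" using M(5) unfolding M'_def by blast
    moreover have "\<Union>N' = g ` \<Union>M'" unfolding N' by blast
    ultimately show ?thesis using cohyperplanar_image_iff[OF assms(1,2)] by simp
  qed
  moreover have "card (image g ` M) = 5" using M(1) inj_image by (simp add: card_image inj_on_subset)
  moreover have "\<forall>P\<in>image g ` M. a_line (g a) P" using M(2) a_line_image[OF inj assms(2)] by blast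
  moreover have "g ` D = \<Union>(image g ` M)" using M(3) by blast
  moreover have "card (g ` D) = 10" using M(4) inj by (simp add: card_image inj_on_subset)
  moreover have "is_cap (g ` D)" using is_cap_image[OF assms(1,2) cap] .
  ultimately show ?thesis unfolding demicap_def by blast
qed

lemma demicaps_containing_image:
  assumes "bij g" "affine_map g"
  shows "{D. demicap (g b) D \<and> g ` S \<subseteq> D} = image g ` {D. demicap b D \<and> S \<subseteq> D}"
proof (intro set_eqI iffI)
  fix D assume D: "D \<in> {D. demicap (g b) D \<and> g ` S \<subseteq> D}"
  have inv: "bij (inv g)" "affine_map (inv g)" using assms by (simp_all add: bij_imp_bij_inv affine_map_inv)
  have inv_g: "inv g (g x) = x" for x using assms(1) by (simp add: bij_is_inj)
  have "demicap b (inv g ` D)" using demicap_image[OF inv] D inv_g by fastforce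
  moreover have "S \<subseteq> inv g ` D"
    using image_mono[of "g ` S" D "inv g"] D assms(1) by (simp add: bij_is_inj image_inv_f_f)
  moreover have "D = g ` inv g ` D" using assms(1) by (simp add: bij_is_surj image_f_inv_f)
  ultimately show "D \<in> image g ` {D. demicap b D \<and> S \<subseteq> D}" by blast
next
  fix D assume "D \<in> image g ` {D. demicap b D \<and> S \<subseteq> D}"
  then show "D \<in> {D. demicap (g b) D \<and> g ` S \<subseteq> D}" using demicap_image[OF assms] by auto
qed

definition std_line :: "4 \<Rightarrow> point set" where
  "std_line k = {axis k 1, - axis k 1}"

definition std_points :: "point set" where
  "std_points = (\<Union>k. std_line k)"

lemma axis_vec4:
  "axis 0 1 = vec4 1 0 0 0" "axis 1 1 = vec4 0 1 0 0" "axis 2 1 = vec4 0 0 1 0" "axis 3 1 = vec4 0 0 0 1"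
  by (simp_all add: point_eq_iff axis_def)

lemma std_points_eq: "std_points = std_line 0 \<union> std_line 1 \<union> std_line 2 \<union> std_line 3"
proof -
  have "std_points = \<Union> (std_line ` {0, 1, 2, 3})" unfolding std_points_def by (simp only: UNIV_index4)
  then show ?thesis by auto
qed

lemma inj_std_line: "inj std_line"
proof (rule injI)
  fix j k assume "std_line j = std_line k"
  then have "axis j 1 = (axis k 1 :: point) \<or> axis j 1 = - (axis k 1 :: point)"
    unfolding std_line_def doubleton_eq_iff by blast
  moreover have "- (axis k 1 :: point) = axis k (- 1)" by (simp add: vec_eq_iff axis_def)
  ultimately show "j = k" by (auto simp: axis_eq_axis)
qed

lemma affine_frame:
  assumes "lin_span [d1, d2, d3, d4] = UNIV"
  obtains g where "bij g" "affine_map g" "g 0 = a"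
    "g ` std_points = {a + d1, a - d1} \<union> {a + d2, a - d2} \<union> {a + d3, a - d3} \<union> {a + d4, a - d4}"
proof
  define g where "g x = a + smul (x$0) d1 + smul (x$1) d2 + smul (x$2) d3 + smul (x$3) d4" for x :: point
  show "affine_map g" unfolding affine_map_def g_def by (simp add: smul_add_left algebra_simps)
  show "g 0 = a" unfolding g_def by simp
  have "y \<in> range g" for y
  proof -
    obtain s t r q where "y - a = smul s d1 + smul t d2 + smul r d3 + smul q d4"
      using assms lin_span_4 by blast
    then have "y = g (vec4 s t r q)" unfolding g_def by (simp add: algebra_simps)
    then show ?thesis by blast
  qed
  then have "surj g" by blast
  then show "bij g" using finite_UNIV_surj_inj[of g] by (simp add: bij_def)
  show "g ` std_points = {a + d1, a - d1} \<union> {a + d2, a - d2} \<union> {a + d3, a - d3} \<union> {a + d4, a - d4}"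
    unfolding std_points_eq std_line_def axis_vec4 g_def by (simp add: smul_minus_left image_Un)
qed

section \<open>Demicaps anchored at the origin\<close>

lemma is_cap_iff: "is_cap C \<longleftrightarrow> (\<forall>x\<in>C. \<forall>y\<in>C. \<forall>z\<in>C. x \<noteq> y \<longrightarrow> y \<noteq> z \<longrightarrow> x \<noteq> z \<longrightarrow> x + y + z \<noteq> 0)"
  unfolding is_cap_def is_line_def by blast

lemma card_Suc_subset_eq_Diff:
  assumes "finite M" "M' \<subseteq> M" "card M = Suc (card M')"
  shows "\<exists>P\<in>M. M' = M - {P}"
proof -
  have "M' \<noteq> M" using assms(3) by auto
  then obtain P where P: "P \<in> M" "P \<notin> M'" using assms(2) by blast
  then have "M' \<subseteq> M - {P}" "card (M - {P}) = card M'" using assms by auto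
  then have "M' = M - {P}" using assms(1) by (intro card_subset_eq) auto
  then show ?thesis using P(1) by blast
qed

lemma demicap_of_directions:
  fixes a :: point and ds :: "point list"
  defines "D \<equiv> \<Union>d\<in>set ds. {a + d, a - d}"
  assumes cap: "is_cap D" and card_D: "card D = 10" and length: "length ds = 5"
    and card_pairs: "card ((\<lambda>d. {a + d, a - d}) ` set ds) = 5" and nonzero: "0 \<notin> set ds"
    and spanning: "\<And>d. d \<in> set ds \<Longrightarrow> lin_span (removeAll d ds) = UNIV"
  shows "demicap a D"
proof -
  define pair where "pair d = {a + d, a - d}" for d
  define M where "M = pair ` set ds"
  have card_M: "card M = 5" using card_pairs unfolding M_def pair_def .
  have "card (set ds) = 5"
    using card_image_le[of "set ds" pair] card_length[of ds] card_M length
    unfolding M_def by simp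
  then have inj: "inj_on pair (set ds)"
    using card_M unfolding M_def by (intro eq_card_imp_inj_on) simp_all
  have four_subsets: "\<not> cohyperplanar (\<Union>M')" if sub: "M' \<subseteq> M" and card4: "card M' = 4" for M'
  proof -
    have "finite M" "card M = Suc (card M')" using card4 card_M unfolding M_def by simp_all
    then obtain P where P: "P \<in> M" "M' = M - {P}"
      using card_Suc_subset_eq_Diff[of M M'] sub by blast
    obtain d where d: "P = pair d" "d \<in> set ds" using P(1) unfolding M_def by (rule imageE)
    have "M' = pair ` set ds - pair ` {d}" using P(2) d(1) unfolding M_def by simp
    also have "\<dots> = pair ` set (removeAll d ds)" using inj d(2) by (simp add: inj_on_image_set_diff)
    finally have "\<Union>M' = (\<Union>e\<in>set (removeAll d ds). {a + e, a - e})" unfolding pair_def by simp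
    then show ?thesis using spanning[OF d(2)] cohyperplanar_pairs_iff[of a "removeAll d ds"] by simp
  qed
  have lines: "\<forall>P\<in>M. a_line a P"
  proof
    fix P assume "P \<in> M"
    then obtain d where "P = {a + d, a - d}" "d \<in> set ds" unfolding M_def pair_def by blast
    then show "a_line a P" unfolding a_line_iff using nonzero by (intro exI[of _ d]) auto
  qed
  have "D = \<Union>M" unfolding D_def M_def pair_def by simp
  then show ?thesis unfolding demicap_def using cap card_D card_M lines four_subsets
    by (intro conjI exI[of _ M]) auto
qed

lemma demicap_std_points_one: "demicap 0 (std_points \<union> {1, - 1})"
proof -
  define ds where "ds = [axis 0 1, axis 1 1, axis 2 1, axis 3 1, 1 :: point]"
  have D: "std_points \<union> {1, - 1} = (\<Union>d\<in>set ds. {0 + d, 0 - d})"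
    unfolding ds_def std_points_eq std_line_def by auto
  have "\<forall>d\<in>set ds. length (removeAll d ds) = 4 \<and> lin_indep (removeAll d ds)"
    unfolding ds_def axis_vec4 vec4_1 by (simp add: lin_indep_4 vec4_0)
  moreover have "is_cap (\<Union>d\<in>set ds. {0 + d, 0 - d})"
    unfolding is_cap_iff ds_def axis_vec4 vec4_1 by (simp add: vec4_0)
  moreover have "card (\<Union>d\<in>set ds. {0 + d, 0 - d}) = 10"
    unfolding ds_def axis_vec4 vec4_1 by simp
  moreover have "card ((\<lambda>d. {0 + d, 0 - d}) ` set ds) = 5"
    unfolding ds_def axis_vec4 vec4_1 by (simp add: doubleton_eq_iff)
  moreover have "0 \<notin> set ds" "length ds = 5"
    unfolding ds_def axis_vec4 vec4_1 by (simp_all add: vec4_0)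
  ultimately show ?thesis unfolding D
    by (intro demicap_of_directions) (auto intro!: lin_span_eq_UNIV_if_lin_indep)
qed

lemma mult_std_line:
  assumes "c $ k \<noteq> 0"
  shows "(*) c ` std_line k = std_line k"
proof -
  have "c * axis k 1 = axis k 1 \<or> c * axis k 1 = - axis k 1"
    using F3_cases[of "c $ k"] assms by (auto simp: vec_eq_iff axis_def)
  then show ?thesis unfolding std_line_def by auto
qed

lemma demicap_std_points_Un:
  assumes "\<forall>i. c $ i \<noteq> 0"
  shows "demicap 0 (std_points \<union> {c, - c})"
proof -
  have "c * (c * x) = x" for x
    using assms by (simp add: vec_eq_iff F3_mult_self mult.assoc[symmetric])
  then have bij: "bij ((*) c)" by (rule involuntory_imp_bij)
  have affine: "affine_map ((*) c)" unfolding affine_map_def by (simp add: distrib_left)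
  have "(*) c ` (std_points \<union> {1, - 1}) = std_points \<union> {c, - c}"
    using mult_std_line assms unfolding std_points_def by (simp add: image_Un image_UN)
  then show ?thesis using demicap_image[OF bij affine demicap_std_points_one] by simp
qed

lemma cohyperplanar_std_lines_but_one:
  assumes "c $ i = 0"
  shows "cohyperplanar ({c, - c} \<union> (\<Union>j\<in>- {i}. std_line j))"
proof -
  define ds where "ds = c # map (\<lambda>j. axis j 1) (filter (\<lambda>j. j \<noteq> i) [0, 1, 2, 3])"
  have set_ds: "set ds = insert c ((\<lambda>j. axis j 1) ` (- {i}))"
    unfolding ds_def Compl_eq_Diff_UNIV UNIV_index4 by auto
  have "{c, - c} \<union> (\<Union>j\<in>- {i}. std_line j) = (\<Union>d\<in>set ds. {0 + d, 0 - d})"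
    unfolding set_ds std_line_def by auto
  moreover have "axis i 1 \<notin> lin_span ds"
  proof
    assume "axis i 1 \<in> lin_span ds"
    moreover have "u $ i = 0" if "u \<in> set ds" for u
      using that assms unfolding set_ds by (auto simp: axis_def split: if_splits)
    ultimately have "axis i 1 $ i = (0 :: 3)" by (rule lin_span_coordinate_zero[rotated])
    then show False by simp
  qed
  ultimately show ?thesis using cohyperplanar_pairs_iff[of 0 ds] by auto
qed

lemma demicap_0_std_form:
  assumes "demicap 0 D" "std_points \<subseteq> D"
  shows "\<exists>c. (\<forall>i. c $ i \<noteq> 0) \<and> D = std_points \<union> {c, - c}"
proof -
  obtain M where M: "card M = 5" "\<forall>P\<in>M. a_line 0 P" "D = \<Union>M"
    "\<forall>M'\<subseteq>M. card M' = 4 \<longrightarrow> \<not> cohyperplanar (\<Union>M')"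
    using assms(1) unfolding demicap_def by blast
  have finite: "finite M" by (rule card_ge_0_finite) (simp add: M(1))
  have std_in: "std_line k \<in> M" for k
  proof -
    have "axis k 1 \<in> \<Union>M" using assms(2) M(3) unfolding std_points_def std_line_def by blast
    then show ?thesis using a_line_0_mem[OF M(2)] unfolding std_line_def by simp
  qed
  have card_std: "card (range std_line) = 4" using inj_std_line by (simp add: card_image)
  then have "M \<noteq> range std_line" using M(1) by auto
  then obtain P5 where P5: "P5 \<in> M" "P5 \<notin> range std_line" using std_in by blast
  have M_eq: "M = insert P5 (range std_line)"
    using std_in P5 M(1) card_std finite by (intro card_subset_eq[symmetric]) auto
  have "a_line 0 P5" using M(2) P5(1) by blast
  then obtain c where c: "P5 = {c, - c}" unfolding a_line_0_iff by blast
  have D: "D = std_points \<union> {c, - c}" unfolding M(3) M_eq c std_points_def by (simp add: Un_commute)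
  have "c $ i \<noteq> 0" for i
  proof
    assume "c $ i = 0"
    have "card (M - {std_line i}) = 4" using M(1) std_in[of i] finite by simp
    moreover have "M - {std_line i} = insert {c, - c} (std_line ` (UNIV - {i}))"
      using P5(2) unfolding M_eq c by (auto simp: image_set_diff[OF inj_std_line])
    then have "\<Union>(M - {std_line i}) = {c, - c} \<union> (\<Union>j\<in>- {i}. std_line j)"
      by (simp add: Compl_eq_Diff_UNIV)
    ultimately show False using M(4) cohyperplanar_std_lines_but_one[OF \<open>c $ i = 0\<close>] by auto
  qed
  then show ?thesis using D by blast
qed

lemma demicaps_0_std_points_eq:
  "{D. demicap 0 D \<and> std_points \<subseteq> D} = (\<lambda>c. std_points \<union> {c, - c}) ` {c. c $ 0 = 1 \<and> (\<forall>i. c $ i \<noteq> 0)}"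
proof (intro set_eqI iffI)
  fix D assume "D \<in> {D. demicap 0 D \<and> std_points \<subseteq> D}"
  then obtain c where c: "\<forall>i. c $ i \<noteq> 0" "D = std_points \<union> {c, - c}"
    using demicap_0_std_form by blast
  consider "c $ 0 = 1" | "c $ 0 = - 1" using F3_cases[of "c $ 0"] c(1) by auto
  then show "D \<in> (\<lambda>c. std_points \<union> {c, - c}) ` {c. c $ 0 = 1 \<and> (\<forall>i. c $ i \<noteq> 0)}"
  proof cases
    case 1
    then show ?thesis using c by blast
  next
    case 2
    then have "- c \<in> {c. c $ 0 = 1 \<and> (\<forall>i. c $ i \<noteq> 0)}" using c(1) by simp
    moreover have "D = std_points \<union> {- c, - (- c)}" using c(2) by auto
    ultimately show ?thesis by blast
  qed
next
  fix D assume "D \<in> (\<lambda>c. std_points \<union> {c, - c}) ` {c. c $ 0 = 1 \<and> (\<forall>i. c $ i \<noteq> 0)}"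
  then show "D \<in> {D. demicap 0 D \<and> std_points \<subseteq> D}" using demicap_std_points_Un by auto
qed

lemma card_normalized_directions: "card {c :: point. c $ 0 = 1 \<and> (\<forall>i. c $ i \<noteq> 0)} = 8"
proof -
  have "{c :: point. c $ 0 = 1 \<and> (\<forall>i. c $ i \<noteq> 0)} = (\<lambda>(s, t, r). vec4 1 s t r) ` ({1, 2} \<times> {1, 2} \<times> {1, 2})"
  proof (intro set_eqI iffI)
    fix c :: point assume "c \<in> {c. c $ 0 = 1 \<and> (\<forall>i. c $ i \<noteq> 0)}"
    then have "c = vec4 1 (c $ 1) (c $ 2) (c $ 3)" "c $ 1 \<in> {1, 2}" "c $ 2 \<in> {1, 2}" "c $ 3 \<in> {1, 2}"
      using F3_cases by (auto simp: point_eq_iff)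
    then show "c \<in> (\<lambda>(s, t, r). vec4 1 s t r) ` ({1, 2} \<times> {1, 2} \<times> {1, 2})" by force
  qed (auto simp: all_index4_iff)
  moreover have "inj_on (\<lambda>(s, t, r). vec4 1 s t r) ({1, 2} \<times> {1, 2} \<times> ({1, 2} :: 3 set))"
    by (rule inj_onI) clarsimp
  ultimately show ?thesis by (simp add: card_image card_cartesian_product)
qed

lemma inj_on_std_points_Un: "inj_on (\<lambda>c. std_points \<union> {c, - c}) {c. c $ 0 = 1 \<and> (\<forall>i. c $ i \<noteq> 0)}"
proof (rule inj_onI)
  fix c c' assume c: "c \<in> {c. c $ 0 = 1 \<and> (\<forall>i. c $ i \<noteq> 0)}" "c' \<in> {c. c $ 0 = 1 \<and> (\<forall>i. c $ i \<noteq> 0)}"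
    and eq: "std_points \<union> {c, - c} = std_points \<union> {c', - c'}"
  have "c \<notin> std_points"
    using c(1) unfolding std_points_eq std_line_def axis_vec4 by (auto simp: point_eq_iff)
  then have "c = c' \<or> c = - c'" using eq by blast
  moreover have "c \<noteq> - c'"
  proof
    assume "c = - c'"
    then have "c $ 0 = - (c' $ 0)" by simp
    then show False using c by simp
  qed
  ultimately show "c = c'" by blast
qed

lemma card_demicaps_0_std_points: "card {D. demicap 0 D \<and> std_points \<subseteq> D} = 8"
  unfolding demicaps_0_std_points_eq card_image[OF inj_on_std_points_Un]
  by (rule card_normalized_directions)

theorem corollary3p7:
  fixes a :: point and L1 L2 L3 L4 :: "point set"
  assumes "a_line a L1" "a_line a L2" "a_line a L3" "a_line a L4"
    and "distinct [L1, L2, L3, L4]"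
    and "\<not> cohyperplanar (L1 \<union> L2 \<union> L3 \<union> L4)"
  shows "card {D. demicap a D \<and> L1 \<union> L2 \<union> L3 \<union> L4 \<subseteq> D} = 8"
proof -
  obtain d1 d2 d3 d4 where L: "L1 = {a + d1, a - d1}" "L2 = {a + d2, a - d2}"
      "L3 = {a + d3, a - d3}" "L4 = {a + d4, a - d4}"
    using assms(1-4) unfolding a_line_iff by metis
  have "L1 \<union> L2 \<union> L3 \<union> L4 = (\<Union>d\<in>set [d1, d2, d3, d4]. {a + d, a - d})"
    unfolding L by auto
  then have "lin_span [d1, d2, d3, d4] = UNIV"
    using assms(6) cohyperplanar_pairs_iff[of a "[d1, d2, d3, d4]"] by simp
  then obtain g where g: "bij g" "affine_map g" "g 0 = a" "g ` std_points = L1 \<union> L2 \<union> L3 \<union> L4"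
    unfolding L by (rule affine_frame)
  have "{D. demicap a D \<and> L1 \<union> L2 \<union> L3 \<union> L4 \<subseteq> D} = image g ` {D. demicap 0 D \<and> std_points \<subseteq> D}"
    using demicaps_containing_image[OF g(1,2), of 0 std_points] g(3,4) by simp
  moreover have "inj (image g)" by (rule injI) (simp add: inj_image_eq_iff[OF bij_is_inj[OF g(1)]])
  ultimately show ?thesis by (simp add: card_image inj_on_subset card_demicaps_0_std_points)
qed

end
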